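(* In the single-block Spice setting, at any iteration $k$ (with $\mathsf{R}(x^k)>0$ and $\mathsf{R}(\bar x^k)>0$), the matrices satisfy $H_k=Q_kM_k^{-1}\succ 0$ and $G_k=Q_k^\top+Q_k-M_k^\top H_k M_k\succ 0$ (with $H_k$, $G_k$ equal to the explicit matrices given in the context), and $$\rho\,[f(x)-f(\bar x^k)]+(w-\bar w^k)^\top\tfrac{1}{\eta_k}\Gamma(\bar w^k)\ \ge\ \tfrac12\|\bar w^k-w^k\|_{G_k}^2+\tfrac12\big(\|w-w^{k+1}\|_{H_k}^2-\|w-w^k\|_{H_k}^2\big)\qquad\forall\,w=(x,\lambda)\in\Omega .$$
   Context: Single-block Spice setting. Let $\mathcal{X}\subseteq\mathbb{R}^n$ be nonempty closed convex, $f:\mathbb{R}^n\to\mathbb{R}$ convex, $\phi_1,\dots,\phi_p:\mathbb{R}^n\to\mathbb{R}$ convex and continuously differentiable, $\Phi(x)=(\phi_1(x),\dots,\phi_p(x))^\top$, $\mathcal{D}\Phi(x)\in\mathbb{R}^{p\times n}$ its Jacobian. Let $\mathcal{Z}=\mathbb{R}^p_+$, $\Omega=\mathcal{X}\times\mathcal{Z}$, $w=(x,\lambda)$, $\Gamma(w)=(\mathcal{D}\Phi(x)^\top\lambda,\,-\Phi(x))$. For a symmetric matrix $A$, $\|v\|_A^2:=v^\top A v$; the norm of a matrix is the spectral norm; $\mathsf{R}(x):=\|\mathcal{D}\Phi(x)\|^2$. The scaled Lagrangian is $\mathcal{L}(x,\lambda,\rho,\eta)=\rho f(x)+\frac1\eta\lambda^\top\Phi(x)$.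 Fix $\rho>0$, $\mu>1$, a starting point $w^0=(x^0,\lambda^0)\in\Omega$ and positive numbers $\eta_0,\eta_1,\dots$. Given $w^k=(x^k,\lambda^k)\in\Omega$, iteration $k$ is: $r_k=\frac{1}{\eta_k}\sqrt{\mathsf{R}(x^k)}$; $\bar x^k=\arg\min_{x\in\mathcal{X}}\{\mathcal{L}(x,\lambda^k,\rho,\eta_k)+\frac{r_k}{2}\|x-x^k\|^2\}$; $s_k=\frac{\mu\,\mathsf{R}(\bar x^k)}{\eta_k\sqrt{\mathsf{R}(x^k)}}$; $\bar\lambda^k=\arg\max_{\lambda\in\mathcal{Z}}\{\mathcal{L}(\bar x^k,\lambda,\rho,\eta_k)-\frac{s_k}{2}\|\lambda-\lambda^k\|^2\}$ (equivalently $\bar\lambda^k=\max\{\lambda^k+\frac{1}{\eta_k s_k}\Phi(\bar x^k),0\}$ componentwise); $\bar w^k=(\bar x^k,\bar\lambda^k)$; and $w^{k+1}=w^k-M_k(w^k-\bar w^k)$ where $M_k=\begin{pmatrix}I_n & -\frac{1}{\eta_k r_k}\mathcal{D}\Phi(\bar x^k)^\top\\ 0 & I_p\end{pmatrix}$. It is assumed throughout that $\mathsf{R}(x^k)>0$ and $\mathsf{R}(\bar x^k)>0$ for all $k$. Define $Q_k=\begin{pmatrix} r_kI_n & -\frac{1}{\eta_k}\mathcal{D}\Phi(\bar x^k)^\top\\ 0 & s_kI_p\end{pmatrix}$, $H_k=\begin{pmatrix} r_kI_n&0\\0&s_kI_p\end{pmatrix}$, $G_k=\begin{pmatrix} r_kI_n&0\\0&s_kI_p-\frac{1}{\eta_k^2r_k}\mathcal{D}\Phi(\bar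 x^k)\mathcal{D}\Phi(\bar x^k)^\top\end{pmatrix}$. *)

theory Defs
  imports "HOL-Analysis.Analysis"
begin

text \<open>Vectors w = (x, lambda) in R^(n+p) are represented as real^('n + 'p),
  block matrices as real^('n+'p)^('n+'p).\<close>

definition join :: "real^'n \<Rightarrow> real^'p \<Rightarrow> real^('n + 'p)" where
  "join x l = (\<chi> i. case i of Inl a \<Rightarrow> x $ a | Inr b \<Rightarrow> l $ b)"

definition blockmat ::
  "real^'n^'n \<Rightarrow> real^'p^'n \<Rightarrow> real^'n^'p \<Rightarrow> real^'p^'p \<Rightarrow> real^('n + 'p)^('n + 'p)" where
  "blockmat A B C D = (\<chi> i j. case i of
      Inl a \<Rightarrow> (case j of Inl c \<Rightarrow> A $ a $ c | Inr d \<Rightarrow> B $ a $ d)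
    | Inr b \<Rightarrow> (case j of Inl c \<Rightarrow> C $ b $ c | Inr d \<Rightarrow> D $ b $ d))"

definition pos_def :: "real^'m^'m \<Rightarrow> bool" where
  "pos_def A \<longleftrightarrow> transpose A = A \<and> (\<forall>v. v \<noteq> 0 \<longrightarrow> v \<bullet> (A *v v) > 0)"

definition wnorm_sq :: "real^'m^'m \<Rightarrow> real^'m \<Rightarrow> real" where
  "wnorm_sq A v = v \<bullet> (A *v v)"

definition specnorm :: "real^'n^'m \<Rightarrow> real" where
  "specnorm A = onorm (\<lambda>v. A *v v)"

definition Rfun :: "('x \<Rightarrow> real^'n^'p) \<Rightarrow> 'x \<Rightarrow> real" where
  "Rfun DPhi x = (specnorm (DPhi x))\<^sup>2"

definition Lag :: "(real^'n \<Rightarrow> real) \<Rightarrow> (real^'n \<Rightarrow> real^'p)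
    \<Rightarrow> real^'n \<Rightarrow> real^'p \<Rightarrow> real \<Rightarrow> real \<Rightarrow> real" where
  "Lag f Phi x l \<rho> \<eta> = \<rho> * f x + (1 / \<eta>) * (l \<bullet> Phi x)"

definition Zset :: "(real^'p) set" where
  "Zset = {l. \<forall>i. 0 \<le> l $ i}"

end

theory Submission
  imports Defs
begin

text \<open>Both prediction steps are proximal steps. Their first-order optimality conditions,
  a variational inequality for \<open>xbar\<close> (\<open>f\<close> convex, \<open>\<Phi>\<close> differentiable) and one for
  \<open>lbar\<close> on the nonnegative orthant, add up to
  \<open>\<rho> (f x - f xbar) + (w - wbar)\<^sup>T \<Gamma>(wbar) / \<eta> \<ge> (w - wbar)\<^sup>T Q (w\<^sup>k - wbar)\<close>.
  Because \<open>Q = H M\<close> with \<open>H\<close> symmetric, the right-hand side is exactly half the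
  \<open>G\<close>-norm of \<open>wbar - w\<^sup>k\<close>, \<open>G = Q\<^sup>T + Q - M\<^sup>T H M\<close>, plus half the difference of the
  \<open>H\<close>-distances from \<open>w\<close> to \<open>w\<^sup>k\<^sup>+\<^sup>1 = w\<^sup>k - M (w\<^sup>k - wbar)\<close> and to \<open>w\<^sup>k\<close>.
  \<open>G\<close> is positive definite because \<open>\<parallel>D\<Phi>(xbar)\<^sup>T \<lambda>\<parallel> \<le> \<parallel>D\<Phi>(xbar)\<parallel> \<parallel>\<lambda>\<parallel>\<close> and \<open>\<mu> > 1\<close>.\<close>

lemma convex_min_first_order:
  fixes g h :: "'a::real_normed_vector \<Rightarrow> real"
  assumes S: "convex S" and g: "convex_on S g" and h: "(h has_derivative h') (at a within S)"
    and a: "a \<in> S" and x: "x \<in> S" and min: "\<And>y. y \<in> S \<Longrightarrow> g a + h a \<le> g y + h y"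
  shows "0 \<le> g x - g a + h' (x - a)"
proof -
  define \<phi> where "\<phi> t = h (a + t *\<^sub>R (x - a))" for t :: real
  have line: "a + t *\<^sub>R (x - a) \<in> S" if "t \<in> {0..1}" for t
    using convexD_alt[OF S a x, of t] that by (simp add: algebra_simps)
  have "((\<lambda>t. a + t *\<^sub>R (x - a)) has_derivative (\<lambda>t. t *\<^sub>R (x - a))) (at 0 within {0..1})"
    by (auto intro!: derivative_eq_intros)
  moreover have "(h has_derivative h') (at (a + 0 *\<^sub>R (x - a)) within (\<lambda>t. a + t *\<^sub>R (x - a)) ` {0..1})"
    using h line by (auto intro: has_derivative_subset)
  ultimately have "(\<phi> has_derivative (\<lambda>t. h' (t *\<^sub>R (x - a)))) (at 0 within {0..1})"
    unfolding \<phi>_def by (rule has_derivative_in_compose)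
  moreover have "(\<lambda>t. h' (t *\<^sub>R (x - a))) = (*) (h' (x - a))"
    using linear_cmul[OF has_derivative_linear[OF h]] by (auto simp: mult.commute)
  ultimately have "((\<lambda>t. (\<phi> t - \<phi> 0) / t) \<longlongrightarrow> h' (x - a)) (at_right 0)"
    by (simp flip: has_field_derivative_def add: has_field_derivative_iff at_within_Icc_at_right)
  moreover have "\<forall>\<^sub>F t in at_right 0. g a - g x \<le> (\<phi> t - \<phi> 0) / t"
  proof (rule eventually_at_rightI[of 0 1])
    fix t :: real assume t: "t \<in> {0<..<1}"
    have "g (a + t *\<^sub>R (x - a)) \<le> (1 - t) * g a + t * g x"
      using convex_onD[OF g, of t a x] t a x by (simp add: algebra_simps)
    moreover have "g a + \<phi> 0 \<le> g (a + t *\<^sub>R (x - a)) + \<phi> t"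
      using min line t by (simp add: \<phi>_def)
    ultimately have "t * (g a - g x) \<le> \<phi> t - \<phi> 0"
      by (simp add: algebra_simps)
    then show "g a - g x \<le> (\<phi> t - \<phi> 0) / t"
      using t by (simp add: pos_le_divide_eq mult.commute)
  qed simp
  ultimately have "g a - g x \<le> h' (x - a)"
    by (intro tendsto_lowerbound) auto
  then show ?thesis by simp
qed

lemma has_derivative_norm_diff_power2:
  fixes c :: "'a::real_inner"
  shows "((\<lambda>x. (norm (x - c))\<^sup>2) has_derivative (\<lambda>v. 2 * ((a - c) \<bullet> v))) (at a within S)"
  unfolding power2_norm_eq_inner
  by (auto intro!: derivative_eq_intros simp: inner_commute)

lemma convex_Zset: "convex Zset"
  by (auto simp: convex_def Zset_def)

lemma transpose_0 [simp]: "transpose 0 = 0"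
  by (simp add: vec_eq_iff transpose_def)

lemma transpose_uminus [simp]: "transpose (- A) = - transpose A"
  by (simp add: vec_eq_iff transpose_def)

lemma transpose_diff [simp]: "transpose (A - B) = transpose A - transpose B"
  by (simp add: vec_eq_iff transpose_def)

lemma matrix_mul_uminus [simp]: "(- A) ** B = - (A ** B)" "A ** (- B) = - (A ** B)"
  for A :: "'a::ring_1^'n^'m"
  by (simp_all add: vec_eq_iff matrix_matrix_mult_def sum_negf)

lemma matrix_vector_mult_uminus_left [simp]: "(- A) *v v = - (A *v v)"
  for A :: "'a::ring_1^'n^'m"
  by (simp add: vec_eq_iff matrix_vector_mult_def sum_negf)

lemma inner_transpose_mult: "x \<bullet> (transpose A *v y) = (A *v x) \<bullet> y"
  for A :: "real^'n::finite^'m::finite"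
  by (simp add: inner_commute flip: dot_lmul_matrix)

lemma norm_transpose_mult_le: "norm (transpose A *v v) \<le> specnorm A * norm v"
  for A :: "real^'n::finite^'m::finite"
proof -
  define y where "y = transpose A *v v"
  have bl: "bounded_linear (\<lambda>u. A *v u)" by simp
  have "(norm y)\<^sup>2 = v \<bullet> (A *v y)"
    by (simp add: y_def power2_norm_eq_inner dot_lmul_matrix)
  also have "\<dots> \<le> norm v * norm (A *v y)" by (rule norm_cauchy_schwarz)
  also have "\<dots> \<le> norm v * (specnorm A * norm y)"
    unfolding specnorm_def by (intro mult_left_mono onorm[OF bl]) auto
  finally have "norm y * norm y \<le> (specnorm A * norm v) * norm y"
    by (simp add: power2_eq_square algebra_simps)
  then show ?thesis
    using onorm_pos_le[OF bl] by (cases "y = 0") (auto simp: y_def specnorm_def)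
qed

lemma wnorm_sq_uminus [simp]: "wnorm_sq A (- v) = wnorm_sq A v"
  by (simp add: wnorm_sq_def linear_neg[OF matrix_vector_mul_linear])

lemma wnorm_sq_three_point:
  fixes H M :: "real^'m::finite^'m"
  assumes H: "transpose H = H"
  shows "(w - v) \<bullet> (H ** M *v (u - v)) =
           1/2 * wnorm_sq (transpose (H ** M) + H ** M - transpose M ** H ** M) (v - u)
         + 1/2 * (wnorm_sq H (w - (u - M *v (u - v))) - wnorm_sq H (w - u))"
proof -
  define a d where "a = w - u" and "d = u - v"
  define e where "e = M *v d"
  have H_sym: "x \<bullet> (H *v y) = y \<bullet> (H *v x)" for x y
    using inner_transpose_mult[of x H y] H by (simp add: inner_commute)
  have "wnorm_sq H (a + e) = wnorm_sq H a + 2 * (a \<bullet> (H *v e)) + wnorm_sq H e"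
    using H_sym[of e a] by (simp add: wnorm_sq_def matrix_vector_right_distrib inner_add_left inner_add_right)
  moreover have "wnorm_sq (transpose (H ** M) + H ** M - transpose M ** H ** M) d
      = 2 * (d \<bullet> (H *v e)) - wnorm_sq H e"
  proof -
    have "d \<bullet> (transpose (H ** M) *v d) = d \<bullet> (H *v e)"
      by (simp add: inner_transpose_mult inner_commute e_def matrix_vector_mul_assoc del: transpose_matrix_vector)
    moreover have "d \<bullet> ((transpose M ** H ** M) *v d) = wnorm_sq H e"
      by (simp add: wnorm_sq_def inner_transpose_mult e_def matrix_vector_mul_assoc[symmetric]
          del: transpose_matrix_vector)
    ultimately show ?thesis
      by (simp add: wnorm_sq_def matrix_vector_mult_add_rdistrib matrix_vector_mult_diff_rdistrib
          inner_add_right inner_diff_right e_def matrix_vector_mul_assoc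
          del: transpose_matrix_vector wnorm_sq_uminus)
  qed
  moreover have "w - (u - M *v (u - v)) = a + e" "w - v = a + d" "v - u = - d" "w - u = a"
    "H ** M *v (u - v) = H *v e"
    by (simp_all add: a_def d_def e_def matrix_vector_mul_assoc)
  ultimately show ?thesis
    by (simp only: wnorm_sq_uminus inner_add_left) (simp add: algebra_simps)
qed

lemma matrix_inv_eqI:
  assumes "A ** B = mat 1" "B ** A = mat 1"
  shows "matrix_inv A = B"
proof -
  have "A ** matrix_inv A = mat 1 \<and> matrix_inv A ** A = mat 1"
    unfolding matrix_inv_def by (rule someI[of _ B]) (use assms in auto)
  then show ?thesis
    by (metis assms(2) matrix_mul_assoc matrix_mul_lid matrix_mul_rid)
qed

lemma pos_def_scaleR_mat_1: "r > 0 \<Longrightarrow> pos_def (r *\<^sub>R mat 1)"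
  by (simp add: pos_def_def transpose_scalar flip: scaleR_matrix_vector_assoc)

lemma pos_def_diff_gram:
  fixes A :: "real^'n::finite^'m::finite"
  assumes "0 \<le> c" "c * (specnorm A)\<^sup>2 < s"
  shows "pos_def (s *\<^sub>R mat 1 - c *\<^sub>R (A ** transpose A))"
  unfolding pos_def_def
proof (intro conjI allI impI)
  show "transpose (s *\<^sub>R mat 1 - c *\<^sub>R (A ** transpose A)) = s *\<^sub>R mat 1 - c *\<^sub>R (A ** transpose A)"
    by (simp add: transpose_scalar matrix_transpose_mul)
next
  fix v :: "real^'m" assume "v \<noteq> 0"
  have "(norm (transpose A *v v))\<^sup>2 \<le> (specnorm A * norm v)\<^sup>2"
    by (intro power_mono norm_transpose_mult_le) auto
  then have "c * (norm (transpose A *v v))\<^sup>2 \<le> c * (specnorm A)\<^sup>2 * (norm v)\<^sup>2"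
    using mult_left_mono[OF _ assms(1)] by (simp add: power_mult_distrib mult.assoc)
  also have "\<dots> < s * (norm v)\<^sup>2"
    using assms(2) \<open>v \<noteq> 0\<close> by simp
  finally show "0 < v \<bullet> ((s *\<^sub>R mat 1 - c *\<^sub>R (A ** transpose A)) *v v)"
    by (simp add: matrix_vector_mult_diff_rdistrib inner_diff_right power2_norm_eq_inner
        flip: scaleR_matrix_vector_assoc matrix_vector_mul_assoc dot_lmul_matrix)
qed

lemma sum_UNIV_Plus:
  "(\<Sum>i\<in>UNIV. g i) = (\<Sum>a\<in>UNIV. g (Inl a)) + (\<Sum>b\<in>UNIV. g (Inr b))"
  for g :: "'a::finite + 'b::finite \<Rightarrow> 'c::comm_monoid_add"
  by (subst UNIV_Plus_UNIV[symmetric], subst sum.Plus) (auto simp: o_def)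

lemma join_nth [simp]: "join x l $ Inl a = x $ a" "join x l $ Inr b = l $ b"
  by (simp_all add: join_def)

lemma blockmat_nth [simp]:
  "blockmat A B C D $ Inl a $ Inl c = A $ a $ c"
  "blockmat A B C D $ Inl a $ Inr d = B $ a $ d"
  "blockmat A B C D $ Inr b $ Inl c = C $ b $ c"
  "blockmat A B C D $ Inr b $ Inr d = D $ b $ d"
  by (simp_all add: blockmat_def)

lemma join_eq_0_iff: "join x l = 0 \<longleftrightarrow> x = 0 \<and> l = 0"
  by (auto simp: vec_eq_iff split_sum_all)

lemma join_cases: obtains x l where "w = join x l"
  by (rule that[of "\<chi> a. w $ Inl a" "\<chi> b. w $ Inr b"]) (simp add: vec_eq_iff split_sum_all)

lemma inner_join: "join x l \<bullet> join y m = x \<bullet> y + l \<bullet> m"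
  by (simp add: inner_vec_def sum_UNIV_Plus)

lemma join_diff: "join x l - join y m = join (x - y) (l - m)"
  by (simp add: vec_eq_iff split_sum_all)

lemma blockmat_mult_join:
  "blockmat A B C D *v join x l = join (A *v x + B *v l) (C *v x + D *v l)"
  by (simp add: vec_eq_iff split_sum_all matrix_vector_mult_def sum_UNIV_Plus)

lemma blockmat_mult:
  "blockmat A B C D ** blockmat A' B' C' D' =
     blockmat (A ** A' + B ** C') (A ** B' + B ** D') (C ** A' + D ** C') (C ** B' + D ** D')"
  by (simp add: vec_eq_iff split_sum_all matrix_matrix_mult_def sum_UNIV_Plus)

lemma transpose_blockmat:
  "transpose (blockmat A B C D) = blockmat (transpose A) (transpose C) (transpose B) (transpose D)"
  by (simp add: vec_eq_iff split_sum_all transpose_def)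

lemma blockmat_add:
  "blockmat A B C D + blockmat A' B' C' D' = blockmat (A + A') (B + B') (C + C') (D + D')"
  by (simp add: vec_eq_iff split_sum_all)

lemma blockmat_diff:
  "blockmat A B C D - blockmat A' B' C' D' = blockmat (A - A') (B - B') (C - C') (D - D')"
  by (simp add: vec_eq_iff split_sum_all)

lemma mat_1_blockmat: "mat 1 = blockmat (mat 1) 0 0 (mat 1)"
  by (simp add: vec_eq_iff split_sum_all mat_def)

lemma pos_def_blockmat_diag:
  assumes "pos_def A" "pos_def D"
  shows "pos_def (blockmat A 0 0 D)"
  unfolding pos_def_def
proof (intro conjI allI impI)
  show "transpose (blockmat A 0 0 D) = blockmat A 0 0 D"
    using assms by (simp add: pos_def_def transpose_blockmat)
next
  fix w :: "real^('a + 'b)" assume "w \<noteq> 0"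
  obtain x l where w: "w = join x l" by (rule join_cases)
  have nonneg: "0 \<le> v \<bullet> (B *v v)" if "pos_def B" for B :: "real^'c^'c" and v
    using that by (cases "v = 0") (auto simp: pos_def_def less_imp_le)
  have "x \<noteq> 0 \<or> l \<noteq> 0"
    using \<open>w \<noteq> 0\<close> by (auto simp: w join_eq_0_iff)
  then have "0 < x \<bullet> (A *v x) + l \<bullet> (D *v l)"
    using assms nonneg[OF assms(1), of x] nonneg[OF assms(2), of l]
    by (auto simp: pos_def_def intro: add_pos_nonneg add_nonneg_pos)
  then show "0 < w \<bullet> (blockmat A 0 0 D *v w)"
    by (simp add: w blockmat_mult_join inner_join)
qed

lemma blockmat_unit_upper_mult_inverse:
  "blockmat (mat 1) B 0 (mat 1) ** blockmat (mat 1) (- B) 0 (mat 1) = mat 1"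
  by (simp add: blockmat_mult mat_1_blockmat)

lemma
  shows invertible_blockmat_unit_upper: "invertible (blockmat (mat 1) B 0 (mat 1))"
    and matrix_inv_blockmat_unit_upper:
      "matrix_inv (blockmat (mat 1) B 0 (mat 1)) = blockmat (mat 1) (- B) 0 (mat 1)"
  using blockmat_unit_upper_mult_inverse[of B] blockmat_unit_upper_mult_inverse[of "- B"]
  by (auto simp: invertible_def intro: matrix_inv_eqI)

lemma inner_blockmat_upper_mult_join:
  "join u v \<bullet> (blockmat (r *\<^sub>R mat 1) B 0 (s *\<^sub>R mat 1) *v join a b)
     = r * (u \<bullet> a) + u \<bullet> (B *v b) + s * (v \<bullet> b)"
  by (simp add: blockmat_mult_join inner_join inner_add_right flip: scaleR_matrix_vector_assoc)

lemma prox_primal_step_vi: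
  fixes Phi :: "real^'n::finite \<Rightarrow> real^'p::finite"
  assumes X: "convex X" and f: "convex_on UNIV f" and \<rho>: "0 \<le> \<rho>"
    and Phi: "(Phi has_derivative (\<lambda>h. D *v h)) (at xbar)"
    and xbar: "xbar \<in> X" and x: "x \<in> X"
    and min: "\<forall>y\<in>X. Lag f Phi xbar lk \<rho> \<eta> + r / 2 * (norm (xbar - xk))\<^sup>2
                   \<le> Lag f Phi y lk \<rho> \<eta> + r / 2 * (norm (y - xk))\<^sup>2"
  shows "r * ((xk - xbar) \<bullet> (x - xbar))
           \<le> \<rho> * (f x - f xbar) + 1 / \<eta> * ((x - xbar) \<bullet> (transpose D *v lk))"
proof -
  define h where "h y = 1 / \<eta> * (lk \<bullet> Phi y) + r / 2 * (norm (y - xk))\<^sup>2" for y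
  have "convex_on X (\<lambda>y. \<rho> * f y)"
    using convex_on_subset[OF f subset_UNIV X] \<rho> by (rule convex_on_cmul[rotated])
  moreover have "(h has_derivative
      (\<lambda>v. 1 / \<eta> * (lk \<bullet> (D *v v)) + r / 2 * (2 * ((xbar - xk) \<bullet> v)))) (at xbar within X)"
    unfolding h_def
    by (intro has_derivative_add has_derivative_mult_right has_derivative_inner_right
        has_derivative_at_withinI[OF Phi] has_derivative_norm_diff_power2)
  moreover have "\<rho> * f xbar + h xbar \<le> \<rho> * f y + h y" if "y \<in> X" for y
    using min[rule_format, OF that] by (simp add: Lag_def h_def add.assoc)
  ultimately have "0 \<le> \<rho> * f x - \<rho> * f xbar + (1 / \<eta> * (lk \<bullet> (D *v (x - xbar)))
      + r / 2 * (2 * ((xbar - xk) \<bullet> (x - xbar))))"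
    by (rule convex_min_first_order[OF X _ _ xbar x])
  then show ?thesis
    by (simp add: algebra_simps inner_commute inner_transpose_mult del: transpose_matrix_vector)
qed

lemma prox_dual_step_vi:
  assumes lbar: "lbar \<in> Zset" and l: "l \<in> Zset"
    and max: "\<forall>m\<in>Zset. Lag f Phi xbar m \<rho> \<eta> - s / 2 * (norm (m - lk))\<^sup>2
                     \<le> Lag f Phi xbar lbar \<rho> \<eta> - s / 2 * (norm (lbar - lk))\<^sup>2"
  shows "s * ((lk - lbar) \<bullet> (l - lbar)) \<le> 1 / \<eta> * ((l - lbar) \<bullet> - Phi xbar)"
proof -
  define h where "h m = s / 2 * (norm (m - lk))\<^sup>2 - 1 / \<eta> * (m \<bullet> Phi xbar)" for m
  have "(h has_derivative
      (\<lambda>v. s / 2 * (2 * ((lbar - lk) \<bullet> v)) - 1 / \<eta> * (v \<bullet> Phi xbar))) (at lbar within Zset)"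
    unfolding h_def
    by (intro has_derivative_diff has_derivative_mult_right has_derivative_inner_left
        has_derivative_ident has_derivative_norm_diff_power2)
  moreover have "0 + h lbar \<le> 0 + h m" if "m \<in> Zset" for m
    using max[rule_format, OF that] by (simp add: Lag_def h_def)
  ultimately have "0 \<le> 0 - 0 + (s / 2 * (2 * ((lbar - lk) \<bullet> (l - lbar))) - 1 / \<eta> * ((l - lbar) \<bullet> Phi xbar))"
    by (rule convex_min_first_order[OF convex_Zset convex_on_const[THEN iffD2, OF convex_Zset] _ lbar l])
  then show ?thesis
    by (simp add: algebra_simps)
qed

lemma spice_block_identities:
  fixes D :: "real^'n::finite^'p::finite" and r s \<eta> :: real
  assumes "r \<noteq> 0"
  defines "M \<equiv> blockmat (mat 1) (- ((1 / (\<eta> * r)) *\<^sub>R transpose D)) 0 (mat 1)"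
    and "Q \<equiv> blockmat (r *\<^sub>R mat 1) (- ((1 / \<eta>) *\<^sub>R transpose D)) 0 (s *\<^sub>R mat 1)"
    and "H \<equiv> blockmat (r *\<^sub>R mat 1) 0 0 (s *\<^sub>R mat 1)"
    and "G \<equiv> blockmat (r *\<^sub>R mat 1) 0 0 (s *\<^sub>R mat 1 - (1 / (\<eta>\<^sup>2 * r)) *\<^sub>R (D ** transpose D))"
  shows "Q = H ** M" and "G = transpose Q + Q - transpose M ** H ** M"
proof -
  show QHM: "Q = H ** M"
    using assms(1) by (simp add: Q_def H_def M_def blockmat_mult matrix_scalar_ac flip: scalar_matrix_assoc)
  show "G = transpose Q + Q - transpose M ** H ** M"
    using assms(1)
    by (simp add: G_def QHM H_def M_def blockmat_mult transpose_blockmat blockmat_add blockmat_diff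
        transpose_scalar power2_eq_square matrix_scalar_ac flip: scalar_matrix_assoc)
       (simp add: vec_eq_iff split_sum_all mat_def algebra_simps)
qed

lemma spice_prediction_vi:
  fixes Phi :: "real^'n::finite \<Rightarrow> real^'p::finite"
  assumes X: "convex X" and f: "convex_on UNIV f" and \<rho>: "0 \<le> \<rho>"
    and Phi: "(Phi has_derivative (\<lambda>h. D *v h)) (at xbar)"
    and xbar: "xbar \<in> X" "\<forall>y\<in>X. Lag f Phi xbar lk \<rho> \<eta> + r / 2 * (norm (xbar - xk))\<^sup>2
                                 \<le> Lag f Phi y lk \<rho> \<eta> + r / 2 * (norm (y - xk))\<^sup>2"
    and lbar: "lbar \<in> Zset" "\<forall>m\<in>Zset. Lag f Phi xbar m \<rho> \<eta> - s / 2 * (norm (m - lk))\<^sup>2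
                                  \<le> Lag f Phi xbar lbar \<rho> \<eta> - s / 2 * (norm (lbar - lk))\<^sup>2"
    and x: "x \<in> X" and l: "l \<in> Zset"
  shows "(join x l - join xbar lbar) \<bullet>
           (blockmat (r *\<^sub>R mat 1) (- ((1 / \<eta>) *\<^sub>R transpose D)) 0 (s *\<^sub>R mat 1)
              *v (join xk lk - join xbar lbar))
         \<le> \<rho> * (f x - f xbar) + 1 / \<eta> * ((x - xbar) \<bullet> (transpose D *v lbar) + (l - lbar) \<bullet> - Phi xbar)"
proof -
  let ?T = "(x - xbar) \<bullet> (transpose D *v (lk - lbar))"
  have "(join x l - join xbar lbar) \<bullet>
          (blockmat (r *\<^sub>R mat 1) (- ((1 / \<eta>) *\<^sub>R transpose D)) 0 (s *\<^sub>R mat 1)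
             *v (join xk lk - join xbar lbar))
      = r * ((xk - xbar) \<bullet> (x - xbar)) - 1 / \<eta> * ?T + s * ((lk - lbar) \<bullet> (l - lbar))"
    by (simp add: join_diff inner_blockmat_upper_mult_join inner_commute
        flip: scaleR_matrix_vector_assoc del: transpose_matrix_vector)
  moreover have "1 / \<eta> * ((x - xbar) \<bullet> (transpose D *v lk))
      = 1 / \<eta> * ((x - xbar) \<bullet> (transpose D *v lbar)) + 1 / \<eta> * ?T"
    by (simp add: matrix_vector_mult_diff_distrib inner_diff_right diff_divide_distrib
        del: transpose_matrix_vector)
  moreover note prox_primal_step_vi[OF X f \<rho> Phi xbar(1) x xbar(2)] prox_dual_step_vi[OF lbar(1) l lbar(2)]
  ultimately show ?thesis
    unfolding distrib_left by linarith
qed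

theorem lemma3p2:
  fixes X :: "(real^'n) set" and f :: "real^'n \<Rightarrow> real"
    and Phi :: "real^'n \<Rightarrow> real^'p" and DPhi :: "real^'n \<Rightarrow> real^'n^'p"
    and \<rho> \<mu> \<eta> r s :: real
    and xk xbar :: "real^'n" and lk lbar :: "real^'p" and wk1 :: "real^('n + 'p)"
  assumes X: "X \<noteq> {}" "closed X" "convex X"
    and f_cvx: "convex_on UNIV f"
    and Phi_cvx: "\<And>i. convex_on UNIV (\<lambda>x. Phi x $ i)"
    and Phi_deriv: "\<And>x. (Phi has_derivative (\<lambda>h. DPhi x *v h)) (at x)"
    and DPhi_cont: "continuous_on UNIV DPhi"
    and r_def: "r = 1 / \<eta> * sqrt (Rfun DPhi xk)"
    and s_def: "s = \<mu> * Rfun DPhi xbar / (\<eta> * sqrt (Rfun DPhi xk))"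
    and \<rho>: "\<rho> > 0" and \<mu>: "\<mu> > 1" and \<eta>: "\<eta> > 0"
    and wk: "xk \<in> X" "lk \<in> Zset"
    and Rpos: "Rfun DPhi xk > 0" "Rfun DPhi xbar > 0"
    and xbar: "xbar \<in> X"
      "\<forall>x\<in>X. Lag f Phi xbar lk \<rho> \<eta> + r / 2 * (norm (xbar - xk))\<^sup>2
             \<le> Lag f Phi x lk \<rho> \<eta> + r / 2 * (norm (x - xk))\<^sup>2"
    and lbar: "lbar \<in> Zset"
      "\<forall>l\<in>Zset. Lag f Phi xbar l \<rho> \<eta>
                  - s / 2 * (norm (l - lk))\<^sup>2
             \<le> Lag f Phi xbar lbar \<rho> \<eta>
                  - s / 2 * (norm (lbar - lk))\<^sup>2"
  defines "M \<equiv> blockmat (mat 1) (- ((1 / (\<eta> * r)) *\<^sub>R transpose (DPhi xbar))) 0 (mat 1)"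
    and "Q \<equiv> blockmat (r *\<^sub>R mat 1) (- ((1 / \<eta>) *\<^sub>R transpose (DPhi xbar))) 0 (s *\<^sub>R mat 1)"
    and "H \<equiv> blockmat (r *\<^sub>R mat 1) 0 0 (s *\<^sub>R mat 1)"
    and "G \<equiv> blockmat (r *\<^sub>R mat 1) 0 0
               (s *\<^sub>R mat 1 - (1 / (\<eta>\<^sup>2 * r)) *\<^sub>R (DPhi xbar ** transpose (DPhi xbar)))"
  assumes wk1_def: "wk1 = join xk lk - M *v (join xk lk - join xbar lbar)"
  shows "invertible M \<and> H = Q ** matrix_inv M \<and> pos_def H
       \<and> G = transpose Q + Q - transpose M ** H ** M \<and> pos_def G
       \<and> (\<forall>x\<in>X. \<forall>l\<in>Zset.
            \<rho> * (f x - f xbar)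
            + (1 / \<eta>) * ((x - xbar) \<bullet> (transpose (DPhi xbar) *v lbar) + (l - lbar) \<bullet> (- Phi xbar))
            \<ge> 1/2 * wnorm_sq G (join xbar lbar - join xk lk)
              + 1/2 * (wnorm_sq H (join x l - wk1) - wnorm_sq H (join x l - join xk lk)))"
proof -
  have "0 < sqrt (Rfun DPhi xk)" "Rfun DPhi xbar < \<mu> * Rfun DPhi xbar"
    using Rpos \<mu> by simp_all
  then have r: "0 < r" and s: "0 < s" and gram: "1 / (\<eta>\<^sup>2 * r) * (specnorm (DPhi xbar))\<^sup>2 < s"
    using \<eta> \<mu> Rpos by (auto simp: r_def s_def Rfun_def power2_eq_square field_simps)
  have QHM: "Q = H ** M" and G: "G = transpose Q + Q - transpose M ** H ** M"
    using spice_block_identities[where D = "DPhi xbar" and r = r and s = s and \<eta> = \<eta>] r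
    unfolding M_def Q_def H_def G_def by auto
  have "invertible M" "M ** matrix_inv M = mat 1"
    using blockmat_unit_upper_mult_inverse[of "- ((1 / (\<eta> * r)) *\<^sub>R transpose (DPhi xbar))"]
    by (simp_all add: M_def invertible_blockmat_unit_upper matrix_inv_blockmat_unit_upper)
  moreover from this(2) have "H = Q ** matrix_inv M"
    by (simp add: QHM flip: matrix_mul_assoc)
  moreover have "pos_def H" "pos_def G"
    using r s gram unfolding H_def G_def
    by (auto intro!: pos_def_blockmat_diag pos_def_scaleR_mat_1 pos_def_diff_gram)
  moreover have "1/2 * wnorm_sq G (join xbar lbar - join xk lk)
        + 1/2 * (wnorm_sq H (join x l - wk1) - wnorm_sq H (join x l - join xk lk))
      \<le> \<rho> * (f x - f xbar)
        + (1 / \<eta>) * ((x - xbar) \<bullet> (transpose (DPhi xbar) *v lbar) + (l - lbar) \<bullet> (- Phi xbar))"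
    if "x \<in> X" "l \<in> Zset" for x l
    using wnorm_sq_three_point[where H = H and M = M and w = "join x l" and v = "join xbar lbar"
        and u = "join xk lk"]
      spice_prediction_vi[OF X(3) f_cvx less_imp_le[OF \<rho>] Phi_deriv xbar lbar that, folded Q_def]
      \<open>pos_def H\<close>
    by (simp add: pos_def_def wk1_def flip: QHM G)
  ultimately show ?thesis
    using G by auto
qed

end
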